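(* Let $\boldsymbol z\in\{0,1\}^n$ and $\boldsymbol y\in\mathbb R^n$. Let $\mathcal Z_1=\{i:z_i=1\}$, $n_1=|\mathcal Z_1|$, and write $\mathcal Z_1=\{j_1,\dots,j_{n_1}\}$ with $\mathrm{rank}_{j_1}(\boldsymbol y)<\dots<\mathrm{rank}_{j_{n_1}}(\boldsymbol y)$. For an integer $0\le L\le n_1$, $c\in\mathbb R$ and $\kappa>0$, let $\mathcal H_L=\{\boldsymbol\delta\in\mathbb R^n:\sum_{i\in\mathcal Z_1}\mathbf 1(\delta_i>c)\le L\}$, $\mathcal A_L=\{j_{n_1-L+1},\dots,j_{n_1}\}$ if $L\ge1$ and $\mathcal A_0=\emptyset$, $\gamma=\max\{y_i:z_i=1\}-\min\{y_i:z_i=0\}+\kappa$, and $\boldsymbol\eta_L\in\mathbb R^n$ with $\eta_{L,i}=\gamma$ for $i\in\mathcal A_L$ and $\eta_{L,i}=c$ otherwise. Then for every $\boldsymbol\delta\in\mathcal H_L$: (i) for each $1\le k\le n_1$, the $k$-th smallest element of $\{\mathrm{rank}_i(\boldsymbol y-\boldsymbol z\circ\boldsymbol\delta):z_i=1\}$ is at least the $k$-th smallest element of $\{\mathrm{rank}_i(\boldsymbol y-\boldsymbol z\circ\boldsymbol\eta_L):z_i=1\}$; (ii) for each $1\le k\le n-n_1$, the $k$-th smallest element of $\{\mathrm{rank}_i(\boldsymbol y-\boldsymbol z\circ\boldsymbol\delta):z_i=0\}$ is at most the $k$-th smallest element of $\{\mathrm{rank}_i(\boldsymbol y-\boldsymbol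 z\circ\boldsymbol\eta_L):z_i=0\}$.
   Context: For $1\le i,j\le n$ and $y,y'\in\mathbb R$, $\psi_{i,j}(y,y')=\mathbf 1\{y>y'\}+\mathbf 1\{y=y'\}\mathbf 1\{i\ge j\}$; for $\boldsymbol y\in\mathbb R^n$, $\mathrm{rank}_i(\boldsymbol y)=\sum_{j=1}^n\psi_{i,j}(y_i,y_j)$ (a permutation of $\{1,\dots,n\}$). $\circ$ denotes the entrywise product. *)

theory Defs
  imports Complex_Main
begin

(* Indices range over {1..n}; vectors in R^n are functions nat => real, only
   their values on {1..n} matter. *)

definition psi :: "nat \<Rightarrow> nat \<Rightarrow> real \<Rightarrow> real \<Rightarrow> nat" where
  "psi i j u v = (if u > v then 1 else 0) + (if u = v \<and> i \<ge> j then 1 else 0)"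

definition rank :: "nat \<Rightarrow> (nat \<Rightarrow> real) \<Rightarrow> nat \<Rightarrow> nat" where
  "rank n y i = (\<Sum>j\<in>{1..n}. psi i j (y i) (y j))"

definition kth_rank :: "nat \<Rightarrow> (nat \<Rightarrow> real) \<Rightarrow> nat set \<Rightarrow> nat \<Rightarrow> nat" where
  "kth_rank n w S k = sort (map (rank n w) (sorted_list_of_set S)) ! (k - 1)"

definition Zset :: "nat \<Rightarrow> (nat \<Rightarrow> real) \<Rightarrow> real \<Rightarrow> nat set" where
  "Zset n z b = {i\<in>{1..n}. z i = b}"

definition js :: "nat \<Rightarrow> (nat \<Rightarrow> real) \<Rightarrow> (nat \<Rightarrow> real) \<Rightarrow> nat list" where
  "js n z y = sort_key (rank n y) (sorted_list_of_set (Zset n z 1))"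

definition A_set :: "nat \<Rightarrow> (nat \<Rightarrow> real) \<Rightarrow> (nat \<Rightarrow> real) \<Rightarrow> nat \<Rightarrow> nat set" where
  "A_set n z y L = set (drop (card (Zset n z 1) - L) (js n z y))"

definition gamma :: "nat \<Rightarrow> (nat \<Rightarrow> real) \<Rightarrow> (nat \<Rightarrow> real) \<Rightarrow> real \<Rightarrow> real" where
  "gamma n z y \<kappa> = Max (y ` Zset n z 1) - Min (y ` Zset n z 0) + \<kappa>"

definition eta :: "nat \<Rightarrow> (nat \<Rightarrow> real) \<Rightarrow> (nat \<Rightarrow> real) \<Rightarrow> nat \<Rightarrow> real \<Rightarrow> real \<Rightarrow> nat \<Rightarrow> real" where
  "eta n z y L c \<kappa> i = (if i \<in> A_set n z y L then gamma n z y \<kappa> else c)"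

definition H_set :: "nat \<Rightarrow> (nat \<Rightarrow> real) \<Rightarrow> nat \<Rightarrow> real \<Rightarrow> (nat \<Rightarrow> real) set" where
  "H_set n z L c = {\<delta>. card {i \<in> Zset n z 1. \<delta> i > c} \<le> L}"

end

theory Submission
  imports Defs "HOL-Library.Product_Lexorder"
begin

(* rank n w i counts the pairs (w j, j) lexicographically below (w i, i), so rank n w is a
   permutation of {1..n}.  Fix a control unit u.  Its comparisons with the other control units
   are the same under delta and under eta.  Under eta, every unit of A_L falls below u (gamma
   exceeds the spread of y), and every other treated unit j falls below u iff (y j - c, j) does;
   call D the set of treated j with this property.  Under delta, the treated units below u lie in
   F \<union> D, where F = {j. delta j > c} has at most L = card A_L elements.  The complement of A_L
   and D are both initial segments of the treated units in the order of y, hence nested, and in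
   either case card (F \<union> D) \<le> card (A_L \<union> D).  So no control unit has a larger rank under
   delta than under eta; since ranks form a permutation, under delta at most as many treated
   units have rank below any threshold as under eta, which compares the order statistics. *)

lemma rank_eq_card: "rank n w i = card {j \<in> {1..n}. (w j, j) \<le> (w i, i)}"
proof -
  have "rank n w i = (\<Sum>j\<in>{1..n}. if (w j, j) \<le> (w i, i) then 1 else 0)"
    unfolding rank_def psi_def by (intro sum.cong) auto
  then show ?thesis
    by (simp add: sum.If_cases Int_def)
qed

lemma rank_le_rank_iff:
  assumes "i \<in> {1..n}" "j \<in> {1..n}"
  shows "rank n w j \<le> rank n w i \<longleftrightarrow> (w j, j) \<le> (w i, i)"
proof
  assume "(w j, j) \<le> (w i, i)"
  then show "rank n w j \<le> rank n w i"
    unfolding rank_eq_card by (intro card_mono) (auto intro: order_trans)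
next
  assume "rank n w j \<le> rank n w i"
  show "(w j, j) \<le> (w i, i)"
  proof (rule ccontr)
    assume "\<not> (w j, j) \<le> (w i, i)"
    then have less: "(w i, i) < (w j, j)" by (rule not_le_imp_less)
    have "{k \<in> {1..n}. (w k, k) \<le> (w i, i)} \<subset> {k \<in> {1..n}. (w k, k) \<le> (w j, j)}"
      using less assms(2) by (auto intro: order_trans)
    then have "rank n w i < rank n w j"
      unfolding rank_eq_card by (intro psubset_card_mono) auto
    with \<open>rank n w j \<le> rank n w i\<close> show False by simp
  qed
qed

lemma bij_betw_rank: "bij_betw (rank n w) {1..n} {1..n}"
proof -
  have "inj_on (rank n w) {1..n}"
  proof (rule inj_onI)
    fix i j assume ij: "i \<in> {1..n}" "j \<in> {1..n}" "rank n w i = rank n w j"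
    then have "(w i, i) = (w j, j)"
      using rank_le_rank_iff[where w = w, OF ij(1,2)] rank_le_rank_iff[where w = w, OF ij(2,1)]
      by (intro order_antisym) (simp_all del: less_eq_prod_simp)
    then show "i = j" by simp
  qed
  moreover have "rank n w ` {1..n} \<subseteq> {1..n}"
  proof
    fix k assume "k \<in> rank n w ` {1..n}"
    then obtain i where i: "i \<in> {1..n}" "k = rank n w i" by blast
    have "card {i} \<le> k"
      unfolding i(2) rank_eq_card using i(1) by (intro card_mono) auto
    moreover have "k \<le> card {1..n}"
      unfolding i(2) rank_eq_card by (intro card_mono) auto
    ultimately show "k \<in> {1..n}" by simp
  qed
  ultimately show ?thesis
    by (simp add: bij_betw_def card_image card_subset_eq)
qed

lemma card_rank_less: "card {i \<in> {1..n}. rank n w i < r} = card {k \<in> {1..n}. k < r}"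
proof -
  have "rank n w ` {i \<in> {1..n}. rank n w i < r} = {k \<in> rank n w ` {1..n}. k < r}"
    by blast
  also have "\<dots> = {k \<in> {1..n}. k < r}"
    using bij_betw_rank[of n w] by (simp add: bij_betw_def)
  finally show ?thesis
    using bij_betw_rank[of n w]
    by (metis (no_types, lifting) bij_betw_def card_image inj_on_subset mem_Collect_eq subsetI)
qed

lemma sorted_nth_less_iff:
  fixes xs :: "'a::linorder list"
  assumes "sorted xs" "k < length xs"
  shows "xs ! k < r \<longleftrightarrow> k < length (filter (\<lambda>x. x < r) xs)"
  using assms
proof (induction xs arbitrary: k)
  case Nil
  then show ?case by simp
next
  case (Cons a xs)
  show ?case
  proof (cases "a < r")
    case True
    with Cons show ?thesis by (cases k) auto
  next
    case False
    with Cons.prems have "filter (\<lambda>x. x < r) (a # xs) = []"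
      by (auto simp: filter_empty_conv)
    moreover have "a \<le> (a # xs) ! k"
      using Cons.prems by (cases k) (auto simp: nth_mem)
    ultimately show ?thesis using False by auto
  qed
qed

lemma kth_rank_less_iff:
  assumes "finite S" "k \<in> {1..card S}"
  shows "kth_rank n w S k < r \<longleftrightarrow> k \<le> card {i \<in> S. rank n w i < r}"
proof -
  let ?xs = "map (rank n w) (sorted_list_of_set S)"
  have "kth_rank n w S k < r \<longleftrightarrow> k - 1 < length (filter (\<lambda>x. x < r) (sort ?xs))"
    unfolding kth_rank_def using assms(2) by (intro sorted_nth_less_iff) auto
  also have "length (filter (\<lambda>x. x < r) (sort ?xs))
      = length (filter (\<lambda>i. rank n w i < r) (sorted_list_of_set S))"
    by (simp add: filter_sort filter_map comp_def)
  also have "\<dots> = card {i \<in> S. rank n w i < r}"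
    using assms(1) by (subst distinct_length_filter) (auto intro: arg_cong[where f = card])
  finally show ?thesis using assms(2) by auto
qed

lemma kth_rank_le_kth_rank:
  assumes "finite S" "k \<in> {1..card S}"
    and "\<And>r. card {i \<in> S. rank n f i < r} \<le> card {i \<in> S. rank n g i < r}"
  shows "kth_rank n g S k \<le> kth_rank n f S k"
proof -
  have "k \<le> card {i \<in> S. rank n f i < Suc (kth_rank n f S k)}"
    using kth_rank_less_iff[OF assms(1,2)] by blast
  also have "\<dots> \<le> card {i \<in> S. rank n g i < Suc (kth_rank n f S k)}"
    by (rule assms(3))
  finally show ?thesis
    using kth_rank_less_iff[OF assms(1,2)] less_Suc_eq_le by blast
qed

lemma card_Collect_split_subset:
  assumes "finite X" "S \<subseteq> X"
  shows "card {i \<in> X. P i} = card {i \<in> S. P i} + card {i \<in> X - S. P i}"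
proof -
  have "card {i \<in> X. P i} = card ({i \<in> X. P i} \<inter> S) + card ({i \<in> X. P i} - S)"
    using assms(1) by (intro card_Int_Diff) simp
  moreover have "{i \<in> X. P i} \<inter> S = {i \<in> S. P i}"
    using assms(2) by blast
  moreover have "{i \<in> X. P i} - S = {i \<in> X - S. P i}"
    by blast
  ultimately show ?thesis by simp
qed

lemma kth_rank_compare_complement:
  assumes S: "S \<subseteq> {1..n}"
    and le: "\<And>u. u \<in> {1..n} - S \<Longrightarrow> rank n f u \<le> rank n g u"
  shows "\<forall>k\<in>{1..card S}. kth_rank n g S k \<le> kth_rank n f S k"
    and "\<forall>k\<in>{1..card ({1..n} - S)}. kth_rank n f ({1..n} - S) k \<le> kth_rank n g ({1..n} - S) k"
proof -
  have compl: "card {i \<in> {1..n} - S. rank n g i < r} \<le> card {i \<in> {1..n} - S. rank n f i < r}" for r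
    using le[THEN le_less_trans] by (intro card_mono) auto
  have "card {i \<in> S. rank n f i < r} \<le> card {i \<in> S. rank n g i < r}" for r
    using card_Collect_split_subset[OF finite_atLeastAtMost S, of "\<lambda>i. rank n f i < r"]
      card_Collect_split_subset[OF finite_atLeastAtMost S, of "\<lambda>i. rank n g i < r"]
      card_rank_less[of n f r] card_rank_less[of n g r] compl[of r]
    by linarith
  moreover have "finite S"
    using S by (rule finite_subset) simp
  ultimately show "\<forall>k\<in>{1..card S}. kth_rank n g S k \<le> kth_rank n f S k"
    by (blast intro: kth_rank_le_kth_rank)
  show "\<forall>k\<in>{1..card ({1..n} - S)}. kth_rank n f ({1..n} - S) k \<le> kth_rank n g ({1..n} - S) k"
    using compl by (blast intro: kth_rank_le_kth_rank)
qed

lemma card_Un_le_card_Un_nested: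
  assumes "finite Z" "A \<subseteq> Z" "D \<subseteq> Z" "F \<subseteq> Z" "card F \<le> card A"
    and "D \<inter> A = {} \<or> Z - A \<subseteq> D"
  shows "card (F \<union> D) \<le> card (A \<union> D)"
  using assms(6)
proof
  assume "D \<inter> A = {}"
  then have "card (A \<union> D) = card A + card D"
    using assms(1-3) by (intro card_Un_disjoint) (auto intro: finite_subset)
  then show ?thesis
    using card_Un_le[of F D] assms(5) by linarith
next
  assume "Z - A \<subseteq> D"
  then have "A \<union> D = Z" using assms(2,3) by blast
  then show ?thesis
    using assms(1,3,4) by (simp add: card_mono)
qed

lemma Zset_finite: "finite (Zset n z b)"
  unfolding Zset_def by simp

lemma Zset_0_eq:
  assumes "\<forall>i\<in>{1..n}. z i \<in> {0, 1}"
  shows "Zset n z 0 = {1..n} - Zset n z 1"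
  using assms unfolding Zset_def by auto

lemma A_set_subset: "A_set n z y L \<subseteq> Zset n z 1"
  unfolding A_set_def js_def by (auto dest: in_set_dropD simp: Zset_finite)

lemma card_A_set: "L \<le> card (Zset n z 1) \<Longrightarrow> card (A_set n z y L) = L"
  unfolding A_set_def js_def by (simp add: distinct_card Zset_finite)

lemma lex_less_A_set:
  assumes v: "v \<in> Zset n z 1 - A_set n z y L" and x: "x \<in> A_set n z y L"
  shows "(y v, v) < (y x, x)"
proof -
  define xs where "xs = js n z y"
  define m where "m = card (Zset n z 1) - L"
  have A: "A_set n z y L = set (drop m xs)"
    unfolding A_set_def xs_def m_def ..
  have "set xs = Zset n z 1" "sorted (map (rank n y) xs)"
    unfolding xs_def js_def by (simp_all add: Zset_finite)
  then have "v \<in> set (take m xs)"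
    using v unfolding A by (metis DiffE Un_iff append_take_drop_id set_append)
  moreover have "sorted (map (rank n y) (take m xs) @ map (rank n y) (drop m xs))"
    using \<open>sorted (map (rank n y) xs)\<close> by (simp flip: map_append)
  ultimately have "rank n y v \<le> rank n y x"
    using x unfolding A by (auto simp: sorted_append)
  moreover have "v \<in> {1..n}" "x \<in> {1..n}"
    using v A_set_subset[of n z y L] x unfolding Zset_def by auto
  ultimately have "(y v, v) \<le> (y x, x)"
    using rank_le_rank_iff by blast
  moreover have "v \<noteq> x"
    using v x by blast
  ultimately show ?thesis
    by (intro order_le_neq_trans) auto
qed

lemma gamma_shift_below:
  assumes "\<kappa> > 0" "j \<in> Zset n z 1" "u \<in> Zset n z 0"
  shows "y j - gamma n z y \<kappa> < y u"
proof -
  have "y j \<le> Max (y ` Zset n z 1)" "Min (y ` Zset n z 0) \<le> y u"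
    using assms(2,3) by (simp_all add: Zset_finite)
  with assms(1) show ?thesis unfolding gamma_def by linarith
qed

lemma treated_below_subset:
  "{j \<in> Zset n z 1. (y j - z j * \<delta> j, j) \<le> (y u, u)}
     \<subseteq> {j \<in> Zset n z 1. c < \<delta> j} \<union> {j \<in> Zset n z 1. (y j - c, j) \<le> (y u, u)}"
proof
  fix j assume j: "j \<in> {j \<in> Zset n z 1. (y j - z j * \<delta> j, j) \<le> (y u, u)}"
  show "j \<in> {j \<in> Zset n z 1. c < \<delta> j} \<union> {j \<in> Zset n z 1. (y j - c, j) \<le> (y u, u)}"
  proof (cases "c < \<delta> j")
    case False
    with j have "y j - c \<le> y j - z j * \<delta> j"
      unfolding Zset_def by auto
    with j show ?thesis by auto
  qed (use j in auto)
qed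

lemma treated_below_eta_supset:
  assumes "\<kappa> > 0" "u \<in> Zset n z 0"
  shows "A_set n z y L \<union> {j \<in> Zset n z 1. (y j - c, j) \<le> (y u, u)}
     \<subseteq> {j \<in> Zset n z 1. (y j - z j * eta n z y L c \<kappa> j, j) \<le> (y u, u)}"
proof
  fix j assume j: "j \<in> A_set n z y L \<union> {j \<in> Zset n z 1. (y j - c, j) \<le> (y u, u)}"
  then have "j \<in> Zset n z 1"
    using A_set_subset by blast
  then have z: "z j = 1"
    unfolding Zset_def by simp
  show "j \<in> {j \<in> Zset n z 1. (y j - z j * eta n z y L c \<kappa> j, j) \<le> (y u, u)}"
  proof (cases "j \<in> A_set n z y L")
    case True
    with gamma_shift_below[OF assms(1) \<open>j \<in> Zset n z 1\<close> assms(2)] show ?thesis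
      using \<open>j \<in> Zset n z 1\<close> z unfolding eta_def by auto
  next
    case False
    with j z show ?thesis
      unfolding eta_def by auto
  qed
qed

lemma A_set_nested:
  "{j \<in> Zset n z 1. (y j - c, j) \<le> p} \<inter> A_set n z y L = {}
   \<or> Zset n z 1 - A_set n z y L \<subseteq> {j \<in> Zset n z 1. (y j - c, j) \<le> p}"
proof (cases "{j \<in> Zset n z 1. (y j - c, j) \<le> p} \<inter> A_set n z y L = {}")
  case False
  then obtain x where x: "x \<in> A_set n z y L" "(y x - c, x) \<le> p" by blast
  have "Zset n z 1 - A_set n z y L \<subseteq> {j \<in> Zset n z 1. (y j - c, j) \<le> p}"
  proof
    fix v assume v: "v \<in> Zset n z 1 - A_set n z y L"
    from v x(1) have "(y v, v) < (y x, x)"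
      by (rule lex_less_A_set)
    then have "(y v - c, v) \<le> (y x - c, x)"
      by auto
    also note x(2)
    finally show "v \<in> {j \<in> Zset n z 1. (y j - c, j) \<le> p}"
      using v by simp
  qed
  then show ?thesis ..
qed simp

lemma rank_control_le:
  fixes n L :: nat and z y \<delta> :: "nat \<Rightarrow> real" and c \<kappa> :: real
  assumes z01: "\<forall>i\<in>{1..n}. z i \<in> {0, 1}"
    and L: "L \<le> card (Zset n z 1)"
    and \<kappa>: "\<kappa> > 0"
    and few_large: "card {i \<in> Zset n z 1. \<delta> i > c} \<le> L"
    and u: "u \<in> Zset n z 0"
  shows "rank n (\<lambda>i. y i - z i * \<delta> i) u \<le> rank n (\<lambda>i. y i - z i * eta n z y L c \<kappa> i) u"
proof -
  define wd where "wd = (\<lambda>i. y i - z i * \<delta> i)"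
  define we where "we = (\<lambda>i. y i - z i * eta n z y L c \<kappa> i)"
  define Z1 where "Z1 = Zset n z 1"
  define D where "D = {j \<in> Z1. (y j - c, j) \<le> (y u, u)}"
  have Z1: "finite Z1" "Z1 \<subseteq> {1..n}"
    unfolding Z1_def Zset_def by auto
  have Z0: "Zset n z 0 = {1..n} - Z1"
    unfolding Z1_def by (rule Zset_0_eq[OF z01])
  have at_u: "wd u = y u" "we u = y u"
    using u unfolding wd_def we_def Zset_def by auto
  have rank_split: "rank n w u = card {j \<in> Z1. (w j, j) \<le> (w u, u)}
      + card {j \<in> Zset n z 0. (w j, j) \<le> (w u, u)}" for w
    unfolding rank_eq_card Z0 by (rule card_Collect_split_subset[OF finite_atLeastAtMost Z1(2)])
  have nested: "D \<inter> A_set n z y L = {} \<or> Z1 - A_set n z y L \<subseteq> D"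
    unfolding D_def Z1_def by (rule A_set_nested)
  have controls:
    "{j \<in> Zset n z 0. (wd j, j) \<le> (wd u, u)} = {j \<in> Zset n z 0. (we j, j) \<le> (we u, u)}"
    using at_u unfolding wd_def we_def Zset_def by auto
  have "card {j \<in> Z1. (wd j, j) \<le> (wd u, u)} \<le> card ({j \<in> Z1. c < \<delta> j} \<union> D)"
    using treated_below_subset[of n z y \<delta> u c] Z1(1) at_u
    unfolding wd_def Z1_def D_def by (intro card_mono) auto
  also have "\<dots> \<le> card (A_set n z y L \<union> D)"
  proof (rule card_Un_le_card_Un_nested[OF Z1(1) _ _ _ _ nested])
    show "A_set n z y L \<subseteq> Z1"
      unfolding Z1_def by (rule A_set_subset)
    show "card {j \<in> Z1. c < \<delta> j} \<le> card (A_set n z y L)"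
      using few_large card_A_set[OF L] unfolding Z1_def by simp
  qed (auto simp: D_def)
  also have "\<dots> \<le> card {j \<in> Z1. (we j, j) \<le> (we u, u)}"
    using treated_below_eta_supset[OF \<kappa> u, where y = y and L = L and c = c] Z1(1) at_u
    unfolding we_def Z1_def D_def by (intro card_mono) auto
  finally show ?thesis
    unfolding wd_def [symmetric] we_def [symmetric] rank_split controls by linarith
qed

theorem lemma6:
  fixes n L :: nat and z y \<delta> :: "nat \<Rightarrow> real" and c \<kappa> :: real
  assumes "\<forall>i\<in>{1..n}. z i \<in> {0, 1}"
    and "L \<le> card (Zset n z 1)"
    and "\<kappa> > 0"
    and "\<delta> \<in> H_set n z L c"
  shows "(\<forall>k\<in>{1..card (Zset n z 1)}.
            kth_rank n (\<lambda>i. y i - z i * \<delta> i) (Zset n z 1) k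
              \<ge> kth_rank n (\<lambda>i. y i - z i * eta n z y L c \<kappa> i) (Zset n z 1) k)
       \<and> (\<forall>k\<in>{1..n - card (Zset n z 1)}.
            kth_rank n (\<lambda>i. y i - z i * \<delta> i) (Zset n z 0) k
              \<le> kth_rank n (\<lambda>i. y i - z i * eta n z y L c \<kappa> i) (Zset n z 0) k)"
proof -
  let ?wd = "\<lambda>i. y i - z i * \<delta> i" and ?we = "\<lambda>i. y i - z i * eta n z y L c \<kappa> i"
  have Z1: "Zset n z 1 \<subseteq> {1..n}"
    unfolding Zset_def by auto
  have Z0: "Zset n z 0 = {1..n} - Zset n z 1"
    using Zset_0_eq[OF assms(1)] .
  have "card {i \<in> Zset n z 1. \<delta> i > c} \<le> L"
    using assms(4) unfolding H_set_def by simp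
  then have "rank n ?wd u \<le> rank n ?we u" if "u \<in> {1..n} - Zset n z 1" for u
    using rank_control_le[OF assms(1-3)] that unfolding Z0 by blast
  note compare = kth_rank_compare_complement[OF Z1 this]
  have "card ({1..n} - Zset n z 1) = n - card (Zset n z 1)"
    using Z1 by (simp add: card_Diff_subset Zset_finite)
  then show ?thesis
    using compare unfolding Z0 by simp
qed

end
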